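(* Let $(X,d)$ be a geodesic space with $\operatorname{Curv}X\ge\kappa$ for some $\kappa\in\mathbb{R}$. Then $X$ is non-branching.
   Context: Let $(M^2_\kappa,d_\kappa)$ be the model plane of constant curvature $\kappa$. For a triangle $(a_1,a_2,a_3)$ in $X$, a comparison triangle is $(\bar a_1,\bar a_2,\bar a_3)$ in $M^2_\kappa$ with $d_\kappa(\bar a_i,\bar a_j)=d(a_i,a_j)$. The circumradius is $r(a_1,a_2,a_3)=\inf_{x\in X}\max_i d(x,a_i)$, and $r(\bar a_1,\bar a_2,\bar a_3)=\inf_{x\in M^2_\kappa}\max_i d_\kappa(x,\bar a_i)$. $\operatorname{Curv}X\ge\kappa$ means $r(a_1,a_2,a_3)\ge r(\bar a_1,\bar a_2,\bar a_3)$ for all triangles in $X$ (for $\kappa>0$ only for triangles whose comparison triangle lies in some ball of radius $\frac{\pi}{2\sqrt\kappa}$). For $t\in[0,1]$ let $Z_t(x,y)=\{z\in X: d(x,z)=t\,d(x,y),\ d(z,y)=(1-t)d(x,y)\}$. A geodesic space is non-branching if for all $x,y,y'\in X$ with $d(x,y)=d(x,y')$, the condition $Z_t(x,y)\cap Z_t(x,y')\neq\emptyset$ for some $t\in(0,1)$ implies $y=y'$. *)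

theory Defs
  imports "HOL-Analysis.Analysis"
begin

text \<open>Model plane of constant curvature k, realised in R^3 (triples):
  k = 0: the Euclidean plane z = 0;
  k > 0: the round sphere of radius 1/sqrt k with its intrinsic (angular) metric;
  k < 0: the upper sheet of the hyperboloid x^2+y^2-z^2 = 1/k with the hyperbolic metric.\<close>

type_synonym pt3 = "real \<times> real \<times> real"

definition model_space :: "real \<Rightarrow> pt3 set" where
  "model_space k =
     (if k = 0 then {(x,y,z). z = 0}
      else if k > 0 then {(x,y,z). x^2 + y^2 + z^2 = 1 / k}
      else {(x,y,z). x^2 + y^2 - z^2 = 1 / k \<and> z > 0})"

definition model_dist :: "real \<Rightarrow> pt3 \<Rightarrow> pt3 \<Rightarrow> real" where
  "model_dist k p q =
     (case p of (x1,y1,z1) \<Rightarrow> case q of (x2,y2,z2) \<Rightarrow>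
       if k = 0 then sqrt ((x1-x2)^2 + (y1-y2)^2 + (z1-z2)^2)
       else if k > 0 then arccos (max (-1) (min 1 (k * (x1*x2 + y1*y2 + z1*z2)))) / sqrt k
       else arcosh (max 1 (k * (x1*x2 + y1*y2 - z1*z2))) / sqrt (- k))"

definition geodesic_space :: "'a::metric_space itself \<Rightarrow> bool" where
  "geodesic_space _ \<longleftrightarrow>
     (\<forall>x y::'a. \<exists>\<gamma>::real \<Rightarrow> 'a. \<gamma> 0 = x \<and> \<gamma> (dist x y) = y \<and>
        (\<forall>s\<in>{0..dist x y}. \<forall>t\<in>{0..dist x y}. dist (\<gamma> s) (\<gamma> t) = \<bar>s - t\<bar>))"

definition circumradius :: "'a::metric_space \<Rightarrow> 'a \<Rightarrow> 'a \<Rightarrow> real" where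
  "circumradius a1 a2 a3 = (INF x\<in>UNIV. max (dist x a1) (max (dist x a2) (dist x a3)))"

definition model_circumradius :: "real \<Rightarrow> pt3 \<Rightarrow> pt3 \<Rightarrow> pt3 \<Rightarrow> real" where
  "model_circumradius k b1 b2 b3 =
     (INF x\<in>model_space k. max (model_dist k x b1) (max (model_dist k x b2) (model_dist k x b3)))"

definition comparison_triangle :: "real \<Rightarrow> 'a::metric_space \<Rightarrow> 'a \<Rightarrow> 'a \<Rightarrow> pt3 \<Rightarrow> pt3 \<Rightarrow> pt3 \<Rightarrow> bool" where
  "comparison_triangle k a1 a2 a3 b1 b2 b3 \<longleftrightarrow>
     b1 \<in> model_space k \<and> b2 \<in> model_space k \<and> b3 \<in> model_space k \<and>
     model_dist k b1 b2 = dist a1 a2 \<and> model_dist k b1 b3 = dist a1 a3 \<and>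
     model_dist k b2 b3 = dist a2 a3"

text \<open>Curv X \<ge> k in the circumradius sense; for k > 0 only triangles whose comparison
  triangle lies in some (open) ball of radius pi/(2 sqrt k) are required.\<close>
definition curv_ge :: "'a::metric_space itself \<Rightarrow> real \<Rightarrow> bool" where
  "curv_ge _ k \<longleftrightarrow>
     (\<forall>(a1::'a) a2 a3 b1 b2 b3. comparison_triangle k a1 a2 a3 b1 b2 b3 \<longrightarrow>
        (k > 0 \<longrightarrow> (\<exists>c\<in>model_space k. model_dist k c b1 < pi / (2 * sqrt k) \<and>
                       model_dist k c b2 < pi / (2 * sqrt k) \<and>
                       model_dist k c b3 < pi / (2 * sqrt k))) \<longrightarrow>
        circumradius a1 a2 a3 \<ge> model_circumradius k b1 b2 b3)"

definition Zt :: "real \<Rightarrow> 'a::metric_space \<Rightarrow> 'a \<Rightarrow> 'a set" where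
  "Zt t x y = {z. dist x z = t * dist x y \<and> dist z y = (1 - t) * dist x y}"

definition non_branching :: "'a::metric_space itself \<Rightarrow> bool" where
  "non_branching _ \<longleftrightarrow>
     (\<forall>x y y'::'a. dist x y = dist x y' \<longrightarrow>
        (\<exists>t\<in>{0<..<1}. Zt t x y \<inter> Zt t x y' \<noteq> {}) \<longrightarrow> y = y')"

end

theory Submission
  imports Defs
begin

text \<open>If two geodesics leave a point z in the same direction as the geodesic from x to z and
  separate, pick a small step h: let p be their last common point, q the point at distance h behind
  p, and y, y' the points at distance h beyond p on the two geodesics. Then d(q,y) = d(q,y') = 2h
  and p lies within h of q, y and y', so the circumradius of (q,y,y') is at most h. In each model
  plane, however, an isosceles triangle with legs 2h and base e > 0 has circumradius strictly
  larger than h, since only the midpoint of a leg is within h of both its ends. The curvature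
  bound therefore forces y = y', and stepping along the geodesics carries the agreement from z to
  their endpoints.\<close>

lemma convex3_min_le:
  fixes l1 l2 l3 t1 t2 t3 :: real
  assumes "0 \<le> l1" "0 \<le> l2" "0 \<le> l3" "l1 + l2 + l3 = 1"
  shows "min t1 (min t2 t3) \<le> l1 * t1 + l2 * t2 + l3 * t3"
proof -
  let ?m = "min t1 (min t2 t3)"
  have "l1 * ?m + l2 * ?m + l3 * ?m \<le> l1 * t1 + l2 * t2 + l3 * t3"
    using assms by (intro add_mono mult_left_mono) auto
  thus ?thesis using assms(4) by (simp flip: distrib_right)
qed

lemma convex3_le_max:
  fixes l1 l2 l3 t1 t2 t3 :: real
  assumes "0 \<le> l1" "0 \<le> l2" "0 \<le> l3" "l1 + l2 + l3 = 1"
  shows "l1 * t1 + l2 * t2 + l3 * t3 \<le> max t1 (max t2 t3)"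
  using convex3_min_le[OF assms, of "-t1" "-t2" "-t3"] by linarith

lemma arccos_clip_antimono:
  "t \<le> s \<Longrightarrow> arccos (max (-1) (min 1 s)) \<le> arccos (max (-1) (min 1 t))"
  by (rule arccos_le_arccos) auto

lemma arcosh_clip_mono:
  fixes s t :: real
  assumes "s \<le> t" shows "arcosh (max 1 s) \<le> arcosh (max 1 t)"
proof -
  have "max 1 s \<le> max 1 t" using assms by auto
  then consider "max 1 s = max 1 t" | "max 1 s < max 1 t" by linarith
  thus ?thesis
    by cases (simp, rule less_imp_le, rule arcosh_real_strict_mono, simp_all)
qed

lemma norm_diff_power2: "(norm (p - b))\<^sup>2 = (norm p)\<^sup>2 - 2 * inner p b + (norm b)\<^sup>2"
  for p b :: "'a::real_inner"
  by (simp add: power2_norm_eq_inner inner_diff inner_commute)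

lemma norm_pt3_power2: "(norm (x, y, z :: real))\<^sup>2 = x\<^sup>2 + y\<^sup>2 + z\<^sup>2"
  by (simp add: norm_Pair)

lemma scaleR_convex3_scaleR:
  fixes e1 e2 e3 :: "'a::real_vector"
  shows "l1 *\<^sub>R (r *\<^sub>R e1) + l2 *\<^sub>R (r *\<^sub>R e2) + l3 *\<^sub>R (r *\<^sub>R e3)
     = r *\<^sub>R (l1 *\<^sub>R e1 + l2 *\<^sub>R e2 + l3 *\<^sub>R e3)"
  by (simp add: scaleR_add_right mult.commute)

lemma sqrt_diff_squares_mult_le:
  fixes a c z1 z2 :: real
  assumes "0 \<le> a" "a \<le> z1" "0 \<le> c" "c \<le> z2"
  shows "sqrt (z1\<^sup>2 - a\<^sup>2) * sqrt (z2\<^sup>2 - c\<^sup>2) \<le> z1 * z2 - a * c"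
proof -
  have "sqrt (z1\<^sup>2 - a\<^sup>2) * sqrt (z2\<^sup>2 - c\<^sup>2) = sqrt ((z1\<^sup>2 - a\<^sup>2) * (z2\<^sup>2 - c\<^sup>2))"
    by (simp add: real_sqrt_mult)
  also have "\<dots> \<le> sqrt ((z1 * z2 - a * c)\<^sup>2)"
  proof (rule real_sqrt_le_mono)
    have "(z1\<^sup>2 - a\<^sup>2) * (z2\<^sup>2 - c\<^sup>2) = (z1 * z2 - a * c)\<^sup>2 - (z1 * c - z2 * a)\<^sup>2"
      by (simp add: power2_eq_square algebra_simps)
    thus "(z1\<^sup>2 - a\<^sup>2) * (z2\<^sup>2 - c\<^sup>2) \<le> (z1 * z2 - a * c)\<^sup>2" by simp
  qed
  also have "\<dots> = z1 * z2 - a * c"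
    using assms by (simp add: mult_mono)
  finally show ?thesis .
qed

section \<open>Circumradius bounds in the model planes\<close>

lemma model_circumradius_greatest:
  assumes "b1 \<in> model_space k"
    and "\<And>p. p \<in> model_space k \<Longrightarrow> c \<le> max (model_dist k p b1) (max (model_dist k p b2) (model_dist k p b3))"
  shows "c \<le> model_circumradius k b1 b2 b3"
  unfolding model_circumradius_def using assms by (intro cINF_greatest) auto

lemma model_dist_zero: "model_dist 0 p q = dist p q"
  by (cases p; cases q) (simp add: model_dist_def dist_Pair_Pair dist_real_def)

lemma model_dist_sphere:
  "k > 0 \<Longrightarrow> model_dist k p q = arccos (max (-1) (min 1 (k * inner p q))) / sqrt k"
  by (cases p; cases q) (simp add: model_dist_def add.assoc)

lemma model_space_sphere: "k > 0 \<Longrightarrow> p \<in> model_space k \<longleftrightarrow> norm p = 1 / sqrt k"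
proof -
  assume "k > 0"
  have "p \<in> model_space k \<longleftrightarrow> inner p p = 1 / k"
    using \<open>k > 0\<close> by (cases p) (simp add: model_space_def power2_eq_square add.assoc)
  also have "\<dots> \<longleftrightarrow> norm p = 1 / sqrt k"
  proof
    assume "inner p p = 1 / k"
    thus "norm p = 1 / sqrt k" by (simp add: norm_eq_sqrt_inner real_sqrt_divide)
  next
    assume "norm p = 1 / sqrt k"
    thus "inner p p = 1 / k" using \<open>k > 0\<close> by (simp flip: power2_norm_eq_inner add: power_divide)
  qed
  finally show ?thesis .
qed

lemma model_dist_sphere_self: "k > 0 \<Longrightarrow> p \<in> model_space k \<Longrightarrow> model_dist k p p = 0"
  by (simp add: model_dist_sphere model_space_sphere flip: power2_norm_eq_inner)
    (simp add: power_divide)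

lemma scaled_mem_model_space_sphere:
  "k > 0 \<Longrightarrow> norm e = 1 \<Longrightarrow> (1 / sqrt k) *\<^sub>R e \<in> model_space k"
  by (simp add: model_space_sphere)

lemma model_dist_sphere_scaled:
  assumes "k > 0" "norm e = 1" "norm e' = 1"
  shows "model_dist k ((1 / sqrt k) *\<^sub>R e) ((1 / sqrt k) *\<^sub>R e') = arccos (inner e e') / sqrt k"
proof -
  have "k * inner ((1 / sqrt k) *\<^sub>R e) ((1 / sqrt k) *\<^sub>R e') = inner e e'"
    using assms(1) by (simp add: power2_eq_square flip: real_sqrt_mult)
  moreover have "\<bar>inner e e'\<bar> \<le> 1" using Cauchy_Schwarz_ineq2[of e e'] assms by simp
  ultimately show ?thesis using assms(1) by (simp add: model_dist_sphere abs_le_iff)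
qed

definition minkowski :: "pt3 \<Rightarrow> pt3 \<Rightarrow> real" where
  "minkowski p q = (case p of (x1, y1, z1) \<Rightarrow> case q of (x2, y2, z2) \<Rightarrow> x1 * x2 + y1 * y2 - z1 * z2)"

lemma minkowski_Pair [simp]:
  "minkowski (x1, y1, z1) (x2, y2, z2) = x1 * x2 + y1 * y2 - z1 * z2"
  by (simp add: minkowski_def)

lemma minkowski_scaleR [simp]: "minkowski (r *\<^sub>R p) (r *\<^sub>R q) = r * r * minkowski p q"
  by (cases p; cases q) (simp add: algebra_simps)

lemma minkowski_convex3_right:
  "minkowski p (l1 *\<^sub>R b1 + l2 *\<^sub>R b2 + l3 *\<^sub>R b3)
     = l1 * minkowski p b1 + l2 * minkowski p b2 + l3 * minkowski p b3"
  by (cases p; cases b1; cases b2; cases b3) (simp add: field_simps)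

lemma minkowski_reverse_cauchy_schwarz:
  assumes "minkowski p p \<le> 0" "0 \<le> snd (snd p)" "minkowski q q \<le> 0" "0 \<le> snd (snd q)"
  shows "sqrt (- minkowski p p) * sqrt (- minkowski q q) \<le> - minkowski p q"
proof -
  obtain x1 y1 z1 x2 y2 z2 where pq: "p = (x1, y1, z1)" "q = (x2, y2, z2)"
    by (cases p; cases q) auto
  define a where "a = norm (x1, y1)"
  define c where "c = norm (x2, y2)"
  have a2: "a\<^sup>2 = x1\<^sup>2 + y1\<^sup>2" and c2: "c\<^sup>2 = x2\<^sup>2 + y2\<^sup>2"
    unfolding a_def c_def norm_Pair by simp_all
  have "x1 * x2 + y1 * y2 \<le> a * c"
    using norm_cauchy_schwarz[of "(x1, y1)" "(x2, y2)"] unfolding a_def c_def by simp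
  moreover have "a \<le> z1" "c \<le> z2"
  proof -
    have "a\<^sup>2 \<le> z1\<^sup>2" "c\<^sup>2 \<le> z2\<^sup>2"
      using assms(1,3) unfolding pq a2 c2 by (simp_all add: power2_eq_square)
    moreover have "0 \<le> z1" "0 \<le> z2" using assms(2,4) unfolding pq by simp_all
    ultimately show "a \<le> z1" "c \<le> z2"
      by (auto intro: power2_le_imp_le)
  qed
  hence "sqrt (z1\<^sup>2 - a\<^sup>2) * sqrt (z2\<^sup>2 - c\<^sup>2) \<le> z1 * z2 - a * c"
    by (intro sqrt_diff_squares_mult_le) (simp_all add: a_def c_def)
  moreover have "- minkowski p p = z1\<^sup>2 - a\<^sup>2" "- minkowski q q = z2\<^sup>2 - c\<^sup>2"
    "- minkowski p q = z1 * z2 - (x1 * x2 + y1 * y2)"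
    unfolding pq a2 c2 by (simp_all add: power2_eq_square)
  ultimately show ?thesis
    by (simp only:)
qed

lemma model_dist_hyperboloid:
  "k < 0 \<Longrightarrow> model_dist k p q = arcosh (max 1 (k * minkowski p q)) / sqrt (- k)"
  by (cases p; cases q) (simp add: model_dist_def)

lemma model_space_hyperboloid:
  "k < 0 \<Longrightarrow> p \<in> model_space k \<longleftrightarrow> minkowski p p = 1 / k \<and> 0 < snd (snd p)"
  by (cases p) (simp add: model_space_def power2_eq_square)

lemma scaled_mem_model_space_hyperboloid:
  assumes "k < 0" "minkowski e e = -1" "0 < snd (snd e)"
  shows "(1 / sqrt (- k)) *\<^sub>R e \<in> model_space k"
  using assms by (simp add: model_space_hyperboloid)

lemma model_dist_hyperboloid_scaled:
  assumes k: "k < 0" and e: "minkowski e e = -1" "0 < snd (snd e)"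
    and e': "minkowski e' e' = -1" "0 < snd (snd e')"
  shows "model_dist k ((1 / sqrt (- k)) *\<^sub>R e) ((1 / sqrt (- k)) *\<^sub>R e') = arcosh (- minkowski e e') / sqrt (- k)"
proof -
  have "k * minkowski ((1 / sqrt (- k)) *\<^sub>R e) ((1 / sqrt (- k)) *\<^sub>R e') = - minkowski e e'"
    using k by (simp add: divide_simps)
  moreover have "1 \<le> - minkowski e e'"
    using minkowski_reverse_cauchy_schwarz[of e e'] e e' by simp
  ultimately show ?thesis using k by (simp add: model_dist_hyperboloid)
qed

text \<open>Each lower bound averages over the vertices with convex weights: squared distances in the
  plane, the cosines k<p, b_i> of the scaled distances on the sphere, and the hyperbolic cosines on
  the hyperboloid. The average is controlled by the barycentre w, through Cauchy--Schwarz and its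
  reverse form for future timelike vectors respectively.\<close>

lemma model_circumradius_plane_ge:
  fixes b1 b2 b3 :: pt3
  assumes "b1 \<in> model_space 0" "0 \<le> l1" "0 \<le> l2" "0 \<le> l3" "l1 + l2 + l3 = 1"
  defines "w \<equiv> l1 *\<^sub>R b1 + l2 *\<^sub>R b2 + l3 *\<^sub>R b3"
  shows "sqrt (l1 * (norm b1)\<^sup>2 + l2 * (norm b2)\<^sup>2 + l3 * (norm b3)\<^sup>2 - (norm w)\<^sup>2)
           \<le> model_circumradius 0 b1 b2 b3"
proof (rule model_circumradius_greatest[OF assms(1)])
  fix p :: pt3
  let ?V = "l1 * (norm b1)\<^sup>2 + l2 * (norm b2)\<^sup>2 + l3 * (norm b3)\<^sup>2 - (norm w)\<^sup>2"
  have pw: "inner p w = l1 * inner p b1 + l2 * inner p b2 + l3 * inner p b3"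
    unfolding w_def by (simp add: inner_add_right)
  have sum1: "l1 * x + l2 * x + l3 * x = x" for x
    using assms(5) by (metis distrib_right mult_1)
  have "l1 * (dist p b1)\<^sup>2 + l2 * (dist p b2)\<^sup>2 + l3 * (dist p b3)\<^sup>2 = (norm (p - w))\<^sup>2 + ?V"
    unfolding dist_norm norm_diff_power2[of p] pw using sum1[of "(norm p)\<^sup>2"]
    by (simp add: algebra_simps)
  hence "?V \<le> max ((dist p b1)\<^sup>2) (max ((dist p b2)\<^sup>2) ((dist p b3)\<^sup>2))"
    using convex3_le_max[OF assms(2-5), of "(dist p b1)\<^sup>2" "(dist p b2)\<^sup>2" "(dist p b3)\<^sup>2"]
      zero_le_power2[of "norm (p - w)"] by linarith
  hence "sqrt ?V \<le> max (dist p b1) (max (dist p b2) (dist p b3))"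
    by (auto simp: max_def real_sqrt_le_iff real_le_lsqrt split: if_splits)
  thus "sqrt ?V \<le> max (model_dist 0 p b1) (max (model_dist 0 p b2) (model_dist 0 p b3))"
    by (simp add: model_dist_zero)
qed

lemma model_circumradius_sphere_ge:
  fixes b1 b2 b3 :: pt3
  assumes k: "k > 0" and "b1 \<in> model_space k" "0 \<le> l1" "0 \<le> l2" "0 \<le> l3" "l1 + l2 + l3 = 1"
  defines "w \<equiv> l1 *\<^sub>R b1 + l2 *\<^sub>R b2 + l3 *\<^sub>R b3"
  shows "arccos (max (-1) (min 1 (sqrt k * norm w))) / sqrt k \<le> model_circumradius k b1 b2 b3"
proof (rule model_circumradius_greatest[OF assms(2)])
  fix p assume "p \<in> model_space k"
  hence np: "norm p = 1 / sqrt k" using model_space_sphere[OF k] by simp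
  let ?K = "sqrt k * norm w"
  have "l1 * (k * inner p b1) + l2 * (k * inner p b2) + l3 * (k * inner p b3) = k * inner p w"
    unfolding w_def by (simp add: inner_add_right algebra_simps)
  also have "\<dots> \<le> k * (norm p * norm w)"
    using k norm_cauchy_schwarz by (intro mult_left_mono) auto
  also have "\<dots> = ?K"
    using real_div_sqrt[of k] k by (simp add: np field_simps)
  finally have min_le: "min (k * inner p b1) (min (k * inner p b2) (k * inner p b3)) \<le> ?K"
    using convex3_min_le[OF assms(3-6), of "k * inner p b1" "k * inner p b2" "k * inner p b3"]
    by linarith
  have bound: "arccos (max (-1) (min 1 ?K)) / sqrt k \<le> model_dist k p b"
    if "k * inner p b \<le> ?K" for b
    using arccos_clip_antimono[OF that] k by (simp add: model_dist_sphere divide_right_mono)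
  consider "k * inner p b1 \<le> ?K" | "k * inner p b2 \<le> ?K" | "k * inner p b3 \<le> ?K"
    using min_le by linarith
  thus "arccos (max (-1) (min 1 ?K)) / sqrt k
          \<le> max (model_dist k p b1) (max (model_dist k p b2) (model_dist k p b3))"
    by cases (auto simp: le_max_iff_disj dest: bound)
qed

lemma model_circumradius_sphere_scaled_ge:
  assumes k: "k > 0" and e1: "norm e1 = 1" and l: "0 \<le> l1" "0 \<le> l2" "0 \<le> l3" "l1 + l2 + l3 = 1"
  shows "arccos (max (-1) (min 1 (norm (l1 *\<^sub>R e1 + l2 *\<^sub>R e2 + l3 *\<^sub>R e3)))) / sqrt k
           \<le> model_circumradius k ((1 / sqrt k) *\<^sub>R e1) ((1 / sqrt k) *\<^sub>R e2) ((1 / sqrt k) *\<^sub>R e3)"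
  using model_circumradius_sphere_ge[OF k scaled_mem_model_space_sphere[OF k e1] l,
      of "(1 / sqrt k) *\<^sub>R e2" "(1 / sqrt k) *\<^sub>R e3"] k
  by (simp only: scaleR_convex3_scaleR) simp

lemma model_circumradius_hyperboloid_ge:
  fixes b1 b2 b3 :: pt3
  assumes k: "k < 0" and "b1 \<in> model_space k" "0 \<le> l1" "0 \<le> l2" "0 \<le> l3" "l1 + l2 + l3 = 1"
  defines "w \<equiv> l1 *\<^sub>R b1 + l2 *\<^sub>R b2 + l3 *\<^sub>R b3"
  assumes w: "minkowski w w \<le> 0" "0 \<le> snd (snd w)"
  shows "arcosh (max 1 (sqrt (- k) * sqrt (- minkowski w w))) / sqrt (- k)
           \<le> model_circumradius k b1 b2 b3"
proof (rule model_circumradius_greatest[OF assms(2)])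
  fix p assume "p \<in> model_space k"
  hence p: "minkowski p p = 1 / k" "0 < snd (snd p)" using model_space_hyperboloid[OF k] by auto
  let ?K = "sqrt (- k) * sqrt (- minkowski w w)"
  have "- minkowski p p = inverse (- k)" using p by (simp add: inverse_eq_divide)
  hence "(- k) * sqrt (- minkowski p p) = (- k) / sqrt (- k)"
    by (simp only: real_sqrt_inverse divide_inverse)
  also have "\<dots> = sqrt (- k)" using k real_div_sqrt[of "- k"] by linarith
  finally have "?K = (- k) * (sqrt (- minkowski p p) * sqrt (- minkowski w w))"
    by (metis mult.assoc)
  also have "\<dots> \<le> (- k) * (- minkowski p w)"
    using k p w by (intro mult_left_mono minkowski_reverse_cauchy_schwarz) auto
  also have "\<dots> = l1 * (k * minkowski p b1) + l2 * (k * minkowski p b2) + l3 * (k * minkowski p b3)"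
    unfolding w_def minkowski_convex3_right by (simp add: algebra_simps)
  finally have le_max: "?K \<le> max (k * minkowski p b1) (max (k * minkowski p b2) (k * minkowski p b3))"
    using convex3_le_max[OF assms(3-6), of "k * minkowski p b1" "k * minkowski p b2" "k * minkowski p b3"]
    by linarith
  have bound: "arcosh (max 1 ?K) / sqrt (- k) \<le> model_dist k p b"
    if "?K \<le> k * minkowski p b" for b
    using arcosh_clip_mono[OF that] k by (simp add: model_dist_hyperboloid divide_right_mono)
  consider "?K \<le> k * minkowski p b1" | "?K \<le> k * minkowski p b2" | "?K \<le> k * minkowski p b3"
    using le_max by linarith
  thus "arcosh (max 1 ?K) / sqrt (- k)
          \<le> max (model_dist k p b1) (max (model_dist k p b2) (model_dist k p b3))"
    by cases (auto simp: le_max_iff_disj dest: bound)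
qed

lemma model_circumradius_hyperboloid_scaled_ge:
  fixes e1 e2 e3 :: pt3
  assumes k: "k < 0" and e1: "minkowski e1 e1 = -1" "0 < snd (snd e1)"
    and l: "0 \<le> l1" "0 \<le> l2" "0 \<le> l3" "l1 + l2 + l3 = 1"
  defines "w \<equiv> l1 *\<^sub>R e1 + l2 *\<^sub>R e2 + l3 *\<^sub>R e3"
  assumes w: "minkowski w w \<le> 0" "0 \<le> snd (snd w)"
  shows "arcosh (max 1 (sqrt (- minkowski w w))) / sqrt (- k)
           \<le> model_circumradius k ((1 / sqrt (- k)) *\<^sub>R e1) ((1 / sqrt (- k)) *\<^sub>R e2) ((1 / sqrt (- k)) *\<^sub>R e3)"
proof -
  let ?r = "1 / sqrt (- k)"
  have "- minkowski (?r *\<^sub>R w) (?r *\<^sub>R w) = (- minkowski w w) / (sqrt (- k))\<^sup>2"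
    by (simp add: power2_eq_square)
  hence "sqrt (- k) * sqrt (- minkowski (?r *\<^sub>R w) (?r *\<^sub>R w)) = sqrt (- minkowski w w)"
    using k by (simp only: real_sqrt_divide real_sqrt_abs) simp
  moreover have "minkowski (?r *\<^sub>R w) (?r *\<^sub>R w) \<le> 0" "0 \<le> snd (snd (?r *\<^sub>R w))"
    using w k by (simp_all add: divide_nonpos_neg)
  ultimately show ?thesis
    using model_circumradius_hyperboloid_ge[OF k scaled_mem_model_space_hyperboloid[OF k e1] l,
        of "?r *\<^sub>R e2" "?r *\<^sub>R e3"]
    unfolding scaleR_convex3_scaleR w_def[symmetric] by simp
qed

section \<open>Isosceles comparison triangles\<close>

definition isosceles_model_triangle :: "real \<Rightarrow> real \<Rightarrow> real \<Rightarrow> pt3 \<Rightarrow> pt3 \<Rightarrow> pt3 \<Rightarrow> bool" where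
  "isosceles_model_triangle k l e b1 b2 b3 \<longleftrightarrow>
     b1 \<in> model_space k \<and> b2 \<in> model_space k \<and> b3 \<in> model_space k \<and>
     model_dist k b1 b2 = l \<and> model_dist k b1 b3 = l \<and> model_dist k b2 b3 = e"

lemma plane_isosceles_circumradius_gt:
  assumes "0 < e" "e \<le> 2 * h"
  obtains b1 b2 b3 where "isosceles_model_triangle 0 (2 * h) e b1 b2 b3"
    "h < model_circumradius 0 b1 b2 b3"
proof -
  define H where "H = sqrt (4 * h\<^sup>2 - e\<^sup>2 / 4)"
  have "e\<^sup>2 \<le> 4 * h\<^sup>2" using power_mono[of e "2 * h" 2] assms by (simp add: power_mult_distrib)
  hence "0 \<le> 4 * h\<^sup>2 - e\<^sup>2 / 4" using zero_le_power2[of h] by linarith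
  hence H2: "H\<^sup>2 = 4 * h\<^sup>2 - e\<^sup>2 / 4" unfolding H_def by simp
  \<comment> \<open>The vertices are placed so that their barycentre with weights 1/2, 1/4, 1/4 is the origin.\<close>
  define b1 :: pt3 where "b1 = (0, H / 2, 0)"
  define b2 :: pt3 where "b2 = (e / 2, - H / 2, 0)"
  define b3 :: pt3 where "b3 = (- e / 2, - H / 2, 0)"
  have "model_dist 0 b1 b2 = sqrt ((2 * h)\<^sup>2)" "model_dist 0 b1 b3 = sqrt ((2 * h)\<^sup>2)"
    "model_dist 0 b2 b3 = sqrt (e\<^sup>2)"
    unfolding b1_def b2_def b3_def model_dist_def using H2 by (simp_all add: power2_eq_square algebra_simps)
  moreover have "sqrt ((2 * h)\<^sup>2) = 2 * h" "sqrt (e\<^sup>2) = e"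
    using assms by (simp_all only: real_sqrt_abs)
  ultimately have "isosceles_model_triangle 0 (2 * h) e b1 b2 b3"
    by (simp only: isosceles_model_triangle_def) (simp add: model_space_def b1_def b2_def b3_def)
  moreover have "sqrt (h\<^sup>2 + e\<^sup>2 / 16) \<le> model_circumradius 0 b1 b2 b3"
  proof -
    have "(1/2) *\<^sub>R b1 + (1/4) *\<^sub>R b2 + (1/4) *\<^sub>R b3 = 0"
      by (simp add: b1_def b2_def b3_def zero_prod_def)
    moreover have "(1/2) * (norm b1)\<^sup>2 + (1/4) * (norm b2)\<^sup>2 + (1/4) * (norm b3)\<^sup>2 = h\<^sup>2 + e\<^sup>2 / 16"
      using H2 by (simp add: b1_def b2_def b3_def norm_pt3_power2 power_divide field_simps)
    moreover have "b1 \<in> model_space 0" by (simp add: model_space_def b1_def)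
    ultimately show ?thesis using model_circumradius_plane_ge[of b1 "1/2" "1/4" "1/4" b2 b3] by simp
  qed
  moreover have "h < sqrt (h\<^sup>2 + e\<^sup>2 / 16)"
    using assms by (intro real_less_rsqrt) simp
  ultimately show ?thesis using that by fastforce
qed

lemma unit_isosceles_sphere:
  assumes "0 < \<beta>" "\<beta> \<le> \<alpha>" "\<alpha> < pi / 2"
  obtains e1 e2 e3 :: pt3
  where "norm e1 = 1" "norm e2 = 1" "norm e3 = 1"
    "inner e1 e2 = cos \<alpha>" "inner e1 e3 = cos \<alpha>" "inner e2 e3 = cos \<beta>"
    "norm ((1/2) *\<^sub>R e1 + (1/4) *\<^sub>R e2 + (1/4) *\<^sub>R e3) < cos (\<alpha> / 2)"
proof -
  define c where "c = cos \<alpha>"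
  define v where "v = sin (\<beta> / 2)"
  define u where "u = sqrt ((cos (\<beta> / 2))\<^sup>2 - c\<^sup>2)"
  have "0 \<le> c" "c \<le> cos (\<beta> / 2)"
    unfolding c_def using assms by (auto intro!: cos_ge_zero cos_monotone_0_pi_le)
  hence u2: "u\<^sup>2 = (cos (\<beta> / 2))\<^sup>2 - c\<^sup>2"
    unfolding u_def by (simp add: power_mono)
  have sc: "v\<^sup>2 + (cos (\<beta> / 2))\<^sup>2 = 1" unfolding v_def by simp
  define e1 :: pt3 where "e1 = (0, 0, 1)"
  define e2 :: pt3 where "e2 = (u, v, c)"
  define e3 :: pt3 where "e3 = (u, - v, c)"
  have "norm e1 = 1" "norm e2 = 1" "norm e3 = 1"
    using u2 sc unfolding e1_def e2_def e3_def norm_eq_1 by (simp_all add: power2_eq_square)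
  moreover have "inner e1 e2 = cos \<alpha>" "inner e1 e3 = cos \<alpha>"
    unfolding e1_def e2_def e3_def c_def by simp_all
  moreover have "inner e2 e3 = cos \<beta>"
    using u2 sc cos_double[of "\<beta> / 2"] unfolding e2_def e3_def v_def by (simp add: power2_eq_square)
  moreover have "norm ((1/2) *\<^sub>R e1 + (1/4) *\<^sub>R e2 + (1/4) *\<^sub>R e3) < cos (\<alpha> / 2)"
  proof (rule power2_less_imp_less)
    have "0 < sin (\<beta> / 2)" using assms by (intro sin_gt_zero) auto
    hence "0 < (sin (\<beta> / 2))\<^sup>2" by simp
    hence "(cos (\<beta> / 2))\<^sup>2 < 1" using sin_cos_squared_add[of "\<beta> / 2"] by linarith
    hence "(u\<^sup>2 + (1 + c)\<^sup>2) / 4 < (1 + c) / 2"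
      unfolding u2 by (simp add: power2_eq_square algebra_simps)
    moreover have "(cos (\<alpha> / 2))\<^sup>2 = (1 + c) / 2"
      using cos_double_cos[of "\<alpha> / 2"] unfolding c_def by simp
    moreover have "(1/2) *\<^sub>R e1 + (1/4) *\<^sub>R e2 + (1/4) *\<^sub>R e3 = (u / 2, 0, (1 + c) / 2)"
      unfolding e1_def e2_def e3_def by (simp add: field_simps)
    ultimately show "(norm ((1/2) *\<^sub>R e1 + (1/4) *\<^sub>R e2 + (1/4) *\<^sub>R e3))\<^sup>2 < (cos (\<alpha> / 2))\<^sup>2"
      by (simp only: norm_pt3_power2) (simp add: power_divide)
    show "0 \<le> cos (\<alpha> / 2)" using assms by (intro cos_ge_zero) auto
  qed
  ultimately show ?thesis using that by blast
qed

lemma sphere_isosceles_circumradius_gt: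
  assumes k: "k > 0" and e: "0 < e" "e \<le> 2 * h" and small: "4 * h * sqrt k < pi"
  obtains b1 b2 b3 where "isosceles_model_triangle k (2 * h) e b1 b2 b3"
    "h < model_circumradius k b1 b2 b3"
proof -
  define \<alpha> where "\<alpha> = 2 * h * sqrt k"
  have angles: "0 < e * sqrt k" "e * sqrt k \<le> \<alpha>" "\<alpha> < pi / 2"
    using k e small unfolding \<alpha>_def by (auto intro: mult_right_mono)
  obtain e1 e2 e3 :: pt3 where unit: "norm e1 = 1" "norm e2 = 1" "norm e3 = 1"
    and ip: "inner e1 e2 = cos \<alpha>" "inner e1 e3 = cos \<alpha>" "inner e2 e3 = cos (e * sqrt k)"
    and w: "norm ((1/2) *\<^sub>R e1 + (1/4) *\<^sub>R e2 + (1/4) *\<^sub>R e3) < cos (\<alpha> / 2)"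
    using unit_isosceles_sphere[OF angles] by blast
  define b1 b2 b3 where "b1 = (1 / sqrt k) *\<^sub>R e1" "b2 = (1 / sqrt k) *\<^sub>R e2" "b3 = (1 / sqrt k) *\<^sub>R e3"
  have "arccos (cos \<alpha>) = \<alpha>" "arccos (cos (e * sqrt k)) = e * sqrt k"
    using angles by (simp_all add: arccos_cos)
  hence "isosceles_model_triangle k (2 * h) e b1 b2 b3"
    unfolding isosceles_model_triangle_def b1_b2_b3_def
    using k unit ip by (simp add: scaled_mem_model_space_sphere model_dist_sphere_scaled \<alpha>_def)
  moreover have "h < model_circumradius k b1 b2 b3"
  proof -
    let ?K = "norm ((1/2) *\<^sub>R e1 + (1/4) *\<^sub>R e2 + (1/4) *\<^sub>R e3)"
    have "?K < 1" using w cos_le_one[of "\<alpha> / 2"] by linarith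
    hence "max (-1) (min 1 ?K) = ?K" by (simp add: order_trans[OF _ norm_ge_zero])
    moreover have "\<alpha> / 2 < arccos ?K"
      using arccos_less_arccos[of ?K "cos (\<alpha> / 2)"] arccos_cos[of "\<alpha> / 2"] w angles
      by (simp add: order_trans[OF _ norm_ge_zero])
    hence "h < arccos ?K / sqrt k"
      using k unfolding \<alpha>_def by (simp add: pos_less_divide_eq)
    ultimately show ?thesis
      using model_circumradius_sphere_scaled_ge[OF k unit(1), of "1/2" "1/4" "1/4" e2 e3]
      unfolding b1_b2_b3_def by simp
  qed
  ultimately show ?thesis using that by blast
qed

lemma unit_isosceles_hyperboloid:
  assumes "0 < \<beta>" "\<beta> \<le> \<alpha>"
  obtains e1 e2 e3 :: pt3
  where "minkowski e1 e1 = -1" "minkowski e2 e2 = -1" "minkowski e3 e3 = -1"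
    "0 < snd (snd e1)" "0 < snd (snd e2)" "0 < snd (snd e3)"
    "- minkowski e1 e2 = cosh \<alpha>" "- minkowski e1 e3 = cosh \<alpha>" "- minkowski e2 e3 = cosh \<beta>"
    "0 < snd (snd ((1/2) *\<^sub>R e1 + (1/4) *\<^sub>R e2 + (1/4) *\<^sub>R e3))"
    "cosh (\<alpha> / 2) < sqrt (- minkowski ((1/2) *\<^sub>R e1 + (1/4) *\<^sub>R e2 + (1/4) *\<^sub>R e3)
                                      ((1/2) *\<^sub>R e1 + (1/4) *\<^sub>R e2 + (1/4) *\<^sub>R e3))"
proof -
  define C where "C = cosh \<alpha>"
  define v where "v = sinh (\<beta> / 2)"
  define u where "u = sqrt (C\<^sup>2 - (cosh (\<beta> / 2))\<^sup>2)"
  have C1: "1 \<le> C" unfolding C_def by (rule cosh_real_ge_1)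
  have "cosh (\<beta> / 2) \<le> C" unfolding C_def using assms by (subst cosh_real_nonneg_le_iff) auto
  hence u2: "u\<^sup>2 = C\<^sup>2 - (cosh (\<beta> / 2))\<^sup>2"
    unfolding u_def using cosh_real_ge_1[of "\<beta> / 2"] by (simp add: power_mono)
  have sc: "(cosh (\<beta> / 2))\<^sup>2 = v\<^sup>2 + 1" unfolding v_def by (rule cosh_square_eq)
  define e1 :: pt3 where "e1 = (0, 0, 1)"
  define e2 :: pt3 where "e2 = (u, v, C)"
  define e3 :: pt3 where "e3 = (u, - v, C)"
  define w :: pt3 where "w = (u / 2, 0, (1 + C) / 2)"
  have w_eq: "(1/2) *\<^sub>R e1 + (1/4) *\<^sub>R e2 + (1/4) *\<^sub>R e3 = w"
    unfolding e1_def e2_def e3_def w_def by simp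
  have m: "minkowski e1 e1 = -1" "minkowski e2 e2 = -1" "minkowski e3 e3 = -1"
    using u2 sc unfolding e1_def e2_def e3_def by (simp_all add: power2_eq_square)
  have z: "0 < snd (snd e1)" "0 < snd (snd e2)" "0 < snd (snd e3)" "0 < snd (snd w)"
    using C1 unfolding e1_def e2_def e3_def w_def by simp_all
  have d: "- minkowski e1 e2 = cosh \<alpha>" "- minkowski e1 e3 = cosh \<alpha>"
    unfolding e1_def e2_def e3_def C_def by simp_all
  have d23: "- minkowski e2 e3 = cosh \<beta>"
    using u2 sc cosh_double[of "\<beta> / 2"] unfolding e2_def e3_def v_def by (simp add: power2_eq_square)
  have K: "cosh (\<alpha> / 2) < sqrt (- minkowski w w)"
  proof (rule real_less_rsqrt)
    have "0 < (sinh (\<beta> / 2))\<^sup>2" using assms by simp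
    moreover have "(cosh (\<alpha> / 2))\<^sup>2 = (1 + C) / 2"
      using cosh_double_cosh[of "\<alpha> / 2"] unfolding C_def by simp
    moreover have "- minkowski w w = ((1 + C)\<^sup>2 - u\<^sup>2) / 4"
      unfolding w_def by (simp add: power2_eq_square field_simps)
    ultimately show "(cosh (\<alpha> / 2))\<^sup>2 < - minkowski w w"
      unfolding u2 sc v_def by (simp add: power2_eq_square field_simps)
  qed
  show ?thesis
    using z(4) K unfolding w_eq[symmetric] by (rule that[OF m z(1-3) d d23])
qed

lemma hyperboloid_isosceles_circumradius_gt:
  assumes k: "k < 0" and e: "0 < e" "e \<le> 2 * h"
  obtains b1 b2 b3 where "isosceles_model_triangle k (2 * h) e b1 b2 b3"
    "h < model_circumradius k b1 b2 b3"
proof -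
  define \<alpha> where "\<alpha> = 2 * h * sqrt (- k)"
  have angles: "0 < e * sqrt (- k)" "e * sqrt (- k) \<le> \<alpha>"
    using k e unfolding \<alpha>_def by (auto intro: mult_right_mono)
  obtain e1 e2 e3 :: pt3 where m: "minkowski e1 e1 = -1" "minkowski e2 e2 = -1" "minkowski e3 e3 = -1"
    and z: "0 < snd (snd e1)" "0 < snd (snd e2)" "0 < snd (snd e3)"
    and d: "- minkowski e1 e2 = cosh \<alpha>" "- minkowski e1 e3 = cosh \<alpha>"
      "- minkowski e2 e3 = cosh (e * sqrt (- k))"
    and zw: "0 < snd (snd ((1/2) *\<^sub>R e1 + (1/4) *\<^sub>R e2 + (1/4) *\<^sub>R e3))"
    and K: "cosh (\<alpha> / 2) < sqrt (- minkowski ((1/2) *\<^sub>R e1 + (1/4) *\<^sub>R e2 + (1/4) *\<^sub>R e3)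
                                      ((1/2) *\<^sub>R e1 + (1/4) *\<^sub>R e2 + (1/4) *\<^sub>R e3))"
    using unit_isosceles_hyperboloid[OF angles] by blast
  define b1 b2 b3 where "b1 = (1 / sqrt (- k)) *\<^sub>R e1" "b2 = (1 / sqrt (- k)) *\<^sub>R e2"
    "b3 = (1 / sqrt (- k)) *\<^sub>R e3"
  have "arcosh (cosh \<alpha>) = \<alpha>" "arcosh (cosh (e * sqrt (- k))) = e * sqrt (- k)"
    using angles by (simp_all add: arcosh_cosh_real)
  hence "isosceles_model_triangle k (2 * h) e b1 b2 b3"
    unfolding isosceles_model_triangle_def b1_b2_b3_def using k m z d
    by (simp add: scaled_mem_model_space_hyperboloid model_dist_hyperboloid_scaled \<alpha>_def)
  moreover have "h < model_circumradius k b1 b2 b3"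
  proof -
    let ?K = "sqrt (- minkowski ((1/2) *\<^sub>R e1 + (1/4) *\<^sub>R e2 + (1/4) *\<^sub>R e3)
                                  ((1/2) *\<^sub>R e1 + (1/4) *\<^sub>R e2 + (1/4) *\<^sub>R e3))"
    have "1 < ?K" using K cosh_real_ge_1[of "\<alpha> / 2"] by linarith
    hence "max 1 ?K = ?K" "minkowski ((1/2) *\<^sub>R e1 + (1/4) *\<^sub>R e2 + (1/4) *\<^sub>R e3)
                                  ((1/2) *\<^sub>R e1 + (1/4) *\<^sub>R e2 + (1/4) *\<^sub>R e3) \<le> 0"
      by (auto simp: real_less_rsqrt)
    moreover have "\<alpha> / 2 < arcosh ?K"
      using arcosh_real_strict_mono[OF cosh_real_ge_1 K] angles by (simp add: arcosh_cosh_real)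
    hence "h < arcosh ?K / sqrt (- k)"
      using k unfolding \<alpha>_def by (simp add: pos_less_divide_eq)
    ultimately show ?thesis
      using model_circumradius_hyperboloid_scaled_ge[OF k m(1) z(1), of "1/2" "1/4" "1/4" e2 e3] zw
      unfolding b1_b2_b3_def by simp
  qed
  ultimately show ?thesis using that by blast
qed

lemma model_isosceles_circumradius_gt:
  assumes e: "0 < e" "e \<le> 2 * h" and small: "k > 0 \<longrightarrow> 4 * h * sqrt k < pi"
  obtains b1 b2 b3 where "isosceles_model_triangle k (2 * h) e b1 b2 b3"
    "k > 0 \<longrightarrow> (\<exists>c\<in>model_space k. model_dist k c b1 < pi / (2 * sqrt k) \<and>
                   model_dist k c b2 < pi / (2 * sqrt k) \<and> model_dist k c b3 < pi / (2 * sqrt k))"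
    "h < model_circumradius k b1 b2 b3"
proof (cases k "0 :: real" rule: linorder_cases)
  case less
  thus ?thesis using hyperboloid_isosceles_circumradius_gt[OF less e] that by auto
next
  case equal
  thus ?thesis using plane_isosceles_circumradius_gt[OF e] that by auto
next
  case greater
  have small: "4 * h * sqrt k < pi" using small greater by blast
  obtain b1 b2 b3 where tri: "isosceles_model_triangle k (2 * h) e b1 b2 b3"
    and gt: "h < model_circumradius k b1 b2 b3"
    using sphere_isosceles_circumradius_gt[OF greater e small] by blast
  have "2 * h < pi / (2 * sqrt k)" using small greater by (simp add: field_simps)
  hence "\<exists>c\<in>model_space k. model_dist k c b1 < pi / (2 * sqrt k) \<and>
           model_dist k c b2 < pi / (2 * sqrt k) \<and> model_dist k c b3 < pi / (2 * sqrt k)"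
    using tri greater e by (intro bexI[of _ b1])
      (auto simp: isosceles_model_triangle_def model_dist_sphere_self)
  thus ?thesis using that tri gt by blast
qed

section \<open>Non-branching of geodesics\<close>

lemma circumradius_le_max_dist:
  "circumradius a1 a2 a3 \<le> max (dist p a1) (max (dist p a2) (dist p a3))"
  unfolding circumradius_def by (rule cINF_lower) (auto intro!: bdd_belowI[of _ 0] simp: le_max_iff_disj)

lemma curv_ge_midpoint_extension_unique:
  fixes q p y y' :: "'a::metric_space"
  assumes curv: "curv_ge TYPE('a) k" and small: "k > 0 \<longrightarrow> 4 * h * sqrt k < pi"
    and "dist q p = h" "dist p y = h" "dist p y' = h" "dist q y = 2 * h" "dist q y' = 2 * h"
  shows "y = y'"
proof (rule ccontr)
  assume "y \<noteq> y'"
  hence e: "0 < dist y y'" "dist y y' \<le> 2 * h"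
    using dist_triangle3[of y y' p] assms(4,5) by auto
  then obtain b1 b2 b3 where tri: "isosceles_model_triangle k (2 * h) (dist y y') b1 b2 b3"
    and ball: "k > 0 \<longrightarrow> (\<exists>c\<in>model_space k. model_dist k c b1 < pi / (2 * sqrt k) \<and>
                   model_dist k c b2 < pi / (2 * sqrt k) \<and> model_dist k c b3 < pi / (2 * sqrt k))"
    and gt: "h < model_circumradius k b1 b2 b3"
    using model_isosceles_circumradius_gt[OF e small] by blast
  have "comparison_triangle k q y y' b1 b2 b3"
    using tri assms(6,7) by (simp add: comparison_triangle_def isosceles_model_triangle_def)
  hence "model_circumradius k b1 b2 b3 \<le> circumradius q y y'"
    using curv ball unfolding curv_ge_def by blast
  also have "\<dots> \<le> h"
    using circumradius_le_max_dist[of q y y' p] assms(3-5) by (simp add: dist_commute)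
  finally show False using gt by simp
qed

definition isometric_on :: "real set \<Rightarrow> (real \<Rightarrow> 'a::metric_space) \<Rightarrow> bool" where
  "isometric_on S g \<longleftrightarrow> (\<forall>s\<in>S. \<forall>t\<in>S. dist (g s) (g t) = \<bar>s - t\<bar>)"

lemma isometric_onD: "isometric_on S g \<Longrightarrow> s \<in> S \<Longrightarrow> t \<in> S \<Longrightarrow> dist (g s) (g t) = \<bar>s - t\<bar>"
  by (simp add: isometric_on_def)

lemma geodesic_spaceE:
  fixes x y :: "'a::metric_space"
  assumes "geodesic_space TYPE('a)"
  obtains g where "g 0 = x" "g (dist x y) = y" "isometric_on {0..dist x y} g"
  using assms unfolding geodesic_space_def isometric_on_def by blast

lemma dist_along_extension:
  assumes g: "isometric_on {0..b} g" "g 0 = z" and "dist x (g b) = dist x z + b"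
    and "0 \<le> s" "s \<le> b"
  shows "dist x (g s) = dist x z + s"
proof -
  have "dist z (g s) = s" "dist (g s) (g b) = b - s"
    using g assms(4,5) isometric_onD[OF g(1), of 0 s] isometric_onD[OF g(1), of s b] by auto
  thus ?thesis
    using dist_triangle[of x "g s" z] dist_triangle[of x "g b" "g s"] assms(3) by linarith
qed

lemma geodesic_extensions_agree_step:
  fixes x z q :: "'a::metric_space"
  assumes curv: "curv_ge TYPE('a) k" and small: "k > 0 \<longrightarrow> 4 * h * sqrt k < pi" and "0 < h"
    and g: "isometric_on {0..b} g" "g 0 = z" "dist x (g b) = dist x z + b"
    and g': "isometric_on {0..b} g'" "g' 0 = z" "dist x (g' b) = dist x z + b"
    and s: "0 \<le> s" "s + h \<le> b" "g s = g' s"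
    and q: "dist q (g s) = h" "dist x q \<le> dist x z + s - h"
  shows "g (s + h) = g' (s + h)"
proof (rule curv_ge_midpoint_extension_unique[OF curv small q(1)])
  show "dist (g s) (g (s + h)) = h" "dist (g s) (g' (s + h)) = h"
    using isometric_onD[OF g(1), of s "s + h"] isometric_onD[OF g'(1), of s "s + h"] s \<open>0 < h\<close>
    by auto
  moreover have "dist x (g (s + h)) = dist x z + s + h" "dist x (g' (s + h)) = dist x z + s + h"
    using dist_along_extension[OF g, of "s + h"] dist_along_extension[OF g', of "s + h"] s \<open>0 < h\<close>
    by auto
  ultimately show "dist q (g (s + h)) = 2 * h" "dist q (g' (s + h)) = 2 * h"
    using q dist_triangle[of q "g (s + h)" "g s"] dist_triangle[of x "g (s + h)" q]
      dist_triangle[of q "g' (s + h)" "g s"] dist_triangle[of x "g' (s + h)" q]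
    by (auto simp: s(3))
qed

lemma point_behind_on_extension:
  fixes x z :: "'a::metric_space"
  assumes geo: "geodesic_space TYPE('a)"
    and g: "isometric_on {0..b} g" "g 0 = z"
    and s: "0 \<le> s" "s \<le> b" "s = 0 \<or> h \<le> s" and h: "0 < h" "h \<le> dist x z"
  obtains q where "dist q (g s) = h" "dist x q \<le> dist x z + s - h"
proof (cases "s = 0")
  case True
  obtain \<sigma> where \<sigma>: "\<sigma> 0 = z" "\<sigma> (dist z x) = x" "isometric_on {0..dist z x} \<sigma>"
    using geodesic_spaceE[OF geo, of z x] by blast
  have "dist (\<sigma> h) (\<sigma> 0) = h" "dist (\<sigma> (dist z x)) (\<sigma> h) = dist x z - h"
    using isometric_onD[OF \<sigma>(3), of h 0] isometric_onD[OF \<sigma>(3), of "dist z x" h] h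
    by (auto simp: dist_commute)
  thus ?thesis using that[of "\<sigma> h"] True \<sigma> g(2) by simp
next
  case False
  hence "dist (g (s - h)) (g s) = h" "dist z (g (s - h)) = s - h"
    using isometric_onD[OF g(1), of "s - h" s] isometric_onD[OF g(1), of 0 "s - h"] s h g(2)
    by auto
  thus ?thesis using that[of "g (s - h)"] dist_triangle[of x "g (s - h)" z] by simp
qed

lemma fine_uniform_partition:
  fixes a b k :: real
  assumes "0 < a" "0 < b"
  obtains N :: nat and h where "0 < h" "h \<le> a" "real N * h = b" "k > 0 \<longrightarrow> 4 * h * sqrt k < pi"
proof -
  obtain N :: nat where N: "max (b / a) (4 * b * sqrt \<bar>k\<bar> / pi) < real N"
    using reals_Archimedean2 by blast
  have N0: "0 < real N" using N assms by (smt (verit) divide_pos_pos)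
  show ?thesis
  proof
    show "0 < b / real N" "real N * (b / real N) = b" using assms N0 by simp_all
    show "b / real N \<le> a" using N N0 assms by (simp add: field_simps)
    show "k > 0 \<longrightarrow> 4 * (b / real N) * sqrt k < pi" using N N0 by (auto simp: field_simps)
  qed
qed

lemma geodesic_extensions_agree:
  fixes x z :: "'a::metric_space"
  assumes geo: "geodesic_space TYPE('a)" and curv: "curv_ge TYPE('a) k"
    and "x \<noteq> z" "0 < b"
    and g: "isometric_on {0..b} g" "g 0 = z" "dist x (g b) = dist x z + b"
    and g': "isometric_on {0..b} g'" "g' 0 = z" "dist x (g' b) = dist x z + b"
  shows "g b = g' b"
proof -
  have "0 < dist x z" using \<open>x \<noteq> z\<close> by simp
  then obtain N :: nat and h where h: "0 < h" "h \<le> dist x z" "real N * h = b"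
    and small: "k > 0 \<longrightarrow> 4 * h * sqrt k < pi"
    using fine_uniform_partition \<open>0 < b\<close> by metis
  have "g (real j * h) = g' (real j * h)" if "j \<le> N" for j
    using that
  proof (induction j)
    case 0
    thus ?case using g(2) g'(2) by simp
  next
    case (Suc j)
    have "real (Suc j) * h \<le> real N * h" using Suc.prems h by (intro mult_right_mono) auto
    hence jh: "0 \<le> real j * h" "real j * h + h \<le> b" using h by (auto simp: algebra_simps)
    have "real j * h \<le> b" "real j * h = 0 \<or> h \<le> real j * h" using jh h(1) by (cases j; auto)+
    then obtain q where q: "dist q (g (real j * h)) = h" "dist x q \<le> dist x z + real j * h - h"
      using point_behind_on_extension[OF geo g(1,2) jh(1) _ _ h(1,2)] by blast
    have "g (real j * h + h) = g' (real j * h + h)"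
      using geodesic_extensions_agree_step[OF curv small h(1) g g' jh Suc.IH q] Suc.prems by simp
    thus ?case by (simp add: algebra_simps)
  qed
  thus ?thesis using h(3) by (metis order_refl)
qed

theorem mainTheorem9:
  fixes k :: real
  assumes "geodesic_space TYPE('a::metric_space)"
    and "curv_ge TYPE('a) k"
  shows "non_branching TYPE('a)"
  unfolding non_branching_def
proof (intro allI impI)
  fix x y y' :: 'a
  assume xy: "dist x y = dist x y'" and "\<exists>t\<in>{0<..<1}. Zt t x y \<inter> Zt t x y' \<noteq> {}"
  then obtain t z where t: "0 < t" "t < 1" and z: "z \<in> Zt t x y" "z \<in> Zt t x y'" by auto
  show "y = y'"
  proof (cases "x = y")
    case True
    thus ?thesis using xy by simp
  next
    case False
    define b where "b = dist z y"
    have b: "0 < b" "dist z y' = b" and xz: "x \<noteq> z" "dist x y = dist x z + b"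
      using z xy t False by (auto simp: Zt_def b_def algebra_simps)
    obtain g where g: "g 0 = z" "g b = y" "isometric_on {0..b} g"
      using geodesic_spaceE[OF assms(1), of z y] unfolding b_def by metis
    obtain g' where g': "g' 0 = z" "g' b = y'" "isometric_on {0..b} g'"
      using geodesic_spaceE[OF assms(1), of z y'] unfolding b(2) by metis
    have "g b = g' b"
      using geodesic_extensions_agree[OF assms xz(1) b(1) g(3,1) _ g'(3,1)] g(2) g'(2) xz(2) xy by simp
    thus ?thesis using g(2) g'(2) by simp
  qed
qed

end
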